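(* Let $z\ge 0$ and let $C_1,F_1,\dots,C_\ell,F_\ell$ be a $z$-antler-sequence for an undirected multigraph $G$. Then for every $1\le i\le\ell$, the pair $(C_1\cup\dots\cup C_i,\;F_1\cup\dots\cup F_i)$ is a $z$-antler in $G$.
   Context: A feedback vertex set (FVS) of $G$ is a set $X\subseteq V(G)$ with $G-X$ acyclic (self-loops and pairs of parallel edges count as cycles); $\mathrm{fvs}(G)$ is the minimum size of a FVS. For disjoint $X,Y$, $e(X,Y)$ is the number of edges between $X$ and $Y$. A feedback vertex cut (FVC) in $G$ is a pair of disjoint sets $C,F\subseteq V(G)$ such that $G[F]$ is a forest and every tree $T$ of $G[F]$ satisfies $e(V(T),V(G)\setminus(C\cup F))\le1$. An antler is a FVC $(C,F)$ with $|C|\le\mathrm{fvs}(G[C\cup F])$. For $C\subseteq V(G)$, a $C$-certificate is a subgraph $H$ of $G$ such that $C$ is a minimum FVS of $H$; it has order $z$ if every component $H'$ of $H$ satisfies $\mathrm{fvs}(H')=|C\cap V(H')|\le z$. A $z$-antler is an antler $(C,F)$ such that $G[C\cup F]$ contains a $C$-certificate of order $z$. A $z$-antler-sequence for $G$ is a sequence of pairwise disjoint vertex sets $C_1,F_1,\dots,C_\ell,F_\ell$ such that for each $i$, $(C_i,F_i)$ is a $z$-antler in $G-\bigcup_{j<i}(C_j\cup F_j)$. *)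

theory Defs
  imports Main
begin

text \<open>Edges are elements of a type 'e; a global map
  ends :: 'e \<Rightarrow> 'v set assigns each edge its set of end vertices
  (a singleton for a self-loop, a two-element set otherwise). A (sub)graph is
  a pair (V, E) of a vertex set and an edge set; all subgraphs of a graph
  share the same ends map, so parallel edges are distinct elements of E.\<close>

type_synonym ('v,'e) mgraph = "'v set \<times> 'e set"

definition wf_mgraph :: "('e \<Rightarrow> 'v set) \<Rightarrow> ('v,'e) mgraph \<Rightarrow> bool" where
  "wf_mgraph ends G \<longleftrightarrow> finite (fst G) \<and> finite (snd G) \<and>
     (\<forall>e\<in>snd G. ends e \<subseteq> fst G \<and> 1 \<le> card (ends e) \<and> card (ends e) \<le> 2)"

definition subgraph :: "('e \<Rightarrow> 'v set) \<Rightarrow> ('v,'e) mgraph \<Rightarrow> ('v,'e) mgraph \<Rightarrow> bool" where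
  "subgraph ends H G \<longleftrightarrow> fst H \<subseteq> fst G \<and> snd H \<subseteq> snd G \<and>
     (\<forall>e\<in>snd H. ends e \<subseteq> fst H)"

definition induced :: "('e \<Rightarrow> 'v set) \<Rightarrow> ('v,'e) mgraph \<Rightarrow> 'v set \<Rightarrow> ('v,'e) mgraph" where
  "induced ends G X = (fst G \<inter> X, {e\<in>snd G. ends e \<subseteq> X})"

definition remove :: "('e \<Rightarrow> 'v set) \<Rightarrow> ('v,'e) mgraph \<Rightarrow> 'v set \<Rightarrow> ('v,'e) mgraph" where
  "remove ends G X = induced ends G (fst G - X)"

text \<open>A cycle: k \<ge> 1 distinct vertices v_0..v_(k-1) and k distinct edges, edge i
  joining v_i and v_((i+1) mod k). For k = 1 this is a self-loop, for k = 2 a pair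
  of parallel edges.\<close>
definition is_cycle :: "('e \<Rightarrow> 'v set) \<Rightarrow> ('v,'e) mgraph \<Rightarrow> 'v list \<Rightarrow> 'e list \<Rightarrow> bool" where
  "is_cycle ends G vs es \<longleftrightarrow> length vs \<ge> 1 \<and> length es = length vs \<and>
     distinct vs \<and> distinct es \<and> set vs \<subseteq> fst G \<and> set es \<subseteq> snd G \<and>
     (\<forall>i < length vs. ends (es ! i) = {vs ! i, vs ! ((i + 1) mod length vs)})"

definition acyclic_mg :: "('e \<Rightarrow> 'v set) \<Rightarrow> ('v,'e) mgraph \<Rightarrow> bool" where
  "acyclic_mg ends G \<longleftrightarrow> \<not> (\<exists>vs es. is_cycle ends G vs es)"

definition is_fvs :: "('e \<Rightarrow> 'v set) \<Rightarrow> ('v,'e) mgraph \<Rightarrow> 'v set \<Rightarrow> bool" where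
  "is_fvs ends G X \<longleftrightarrow> X \<subseteq> fst G \<and> acyclic_mg ends (remove ends G X)"

definition fvs :: "('e \<Rightarrow> 'v set) \<Rightarrow> ('v,'e) mgraph \<Rightarrow> nat" where
  "fvs ends G = Min (card ` {X. is_fvs ends G X})"

definition adj_rel :: "('e \<Rightarrow> 'v set) \<Rightarrow> ('v,'e) mgraph \<Rightarrow> ('v \<times> 'v) set" where
  "adj_rel ends G = {(u, v). \<exists>e\<in>snd G. ends e = {u, v}}"

definition components :: "('e \<Rightarrow> 'v set) \<Rightarrow> ('v,'e) mgraph \<Rightarrow> 'v set set" where
  "components ends G = (\<lambda>u. {v \<in> fst G. (u, v) \<in> (adj_rel ends G)\<^sup>*}) ` fst G"

definition edges_between :: "('e \<Rightarrow> 'v set) \<Rightarrow> ('v,'e) mgraph \<Rightarrow> 'v set \<Rightarrow> 'v set \<Rightarrow> nat" where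
  "edges_between ends G X Y = card {e \<in> snd G. \<exists>x\<in>X. \<exists>y\<in>Y. ends e = {x, y}}"

definition is_fvc :: "('e \<Rightarrow> 'v set) \<Rightarrow> ('v,'e) mgraph \<Rightarrow> 'v set \<Rightarrow> 'v set \<Rightarrow> bool" where
  "is_fvc ends G C F \<longleftrightarrow> C \<subseteq> fst G \<and> F \<subseteq> fst G \<and> C \<inter> F = {} \<and>
     acyclic_mg ends (induced ends G F) \<and>
     (\<forall>T \<in> components ends (induced ends G F).
        edges_between ends G T (fst G - (C \<union> F)) \<le> 1)"

definition is_antler :: "('e \<Rightarrow> 'v set) \<Rightarrow> ('v,'e) mgraph \<Rightarrow> 'v set \<Rightarrow> 'v set \<Rightarrow> bool" where
  "is_antler ends G C F \<longleftrightarrow> is_fvc ends G C F \<and> card C \<le> fvs ends (induced ends G (C \<union> F))"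

definition is_certificate :: "('e \<Rightarrow> 'v set) \<Rightarrow> ('v,'e) mgraph \<Rightarrow> 'v set \<Rightarrow> nat \<Rightarrow> ('v,'e) mgraph \<Rightarrow> bool" where
  "is_certificate ends G C z H \<longleftrightarrow> subgraph ends H G \<and>
     is_fvs ends H C \<and> card C = fvs ends H \<and>
     (\<forall>K \<in> components ends H.
        fvs ends (induced ends H K) = card (C \<inter> K) \<and> card (C \<inter> K) \<le> z)"

definition is_z_antler :: "('e \<Rightarrow> 'v set) \<Rightarrow> nat \<Rightarrow> ('v,'e) mgraph \<Rightarrow> 'v set \<Rightarrow> 'v set \<Rightarrow> bool" where
  "is_z_antler ends z G C F \<longleftrightarrow> is_antler ends G C F \<and>
     (\<exists>H. is_certificate ends (induced ends G (C \<union> F)) C z H)"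

text \<open>z-antler-sequence C_1,F_1,...,C_l,F_l given as two lists of length l (0-indexed).\<close>
definition is_z_antler_seq :: "('e \<Rightarrow> 'v set) \<Rightarrow> nat \<Rightarrow> ('v,'e) mgraph \<Rightarrow> 'v set list \<Rightarrow> 'v set list \<Rightarrow> bool" where
  "is_z_antler_seq ends z G Cs Fs \<longleftrightarrow> length Cs = length Fs \<and>
     (\<forall>i < length Cs. \<forall>j < length Cs. Cs ! i \<inter> Fs ! j = {} \<and>
        (i \<noteq> j \<longrightarrow> Cs ! i \<inter> Cs ! j = {} \<and> Fs ! i \<inter> Fs ! j = {})) \<and>
     (\<forall>i < length Cs. is_z_antler ends z
        (remove ends G (\<Union>j<i. Cs ! j \<union> Fs ! j)) (Cs ! i) (Fs ! i))"

end

theory Submission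
  imports Defs
begin

text \<open>It suffices to glue two antlers: a \<open>z\<close>-antler \<open>(C1, F1)\<close> of \<open>G\<close> and a \<open>z\<close>-antler
  \<open>(C2, F2)\<close> of \<open>G - (C1 \<union> F1)\<close>. Every tree of \<open>G[F1]\<close> has at most one edge to
  \<open>R1 = V - (C1 \<union> F1)\<close>, which contains \<open>F2\<close>. Hence a cycle of \<open>G[F1 \<union> F2]\<close> cannot leave a
  tree of \<open>G[F1]\<close>, and a tree of \<open>G[F1 \<union> F2]\<close> is either a tree of \<open>G[F1]\<close> whose exit edge avoids
  \<open>F2\<close>, or a tree of \<open>G[F2]\<close> with trees of \<open>G[F1]\<close> hanging from it by their exit edges; either
  way it keeps at most one edge to the rest of the graph. The two certificates are vertex-disjoint,
  and minimum feedback vertex sets, \<open>fvs\<close> and components all split over disjoint unions, so their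
  union certifies \<open>C1 \<union> C2\<close>.\<close>

lemma fst_induced [simp]: "fst (induced ends G X) = fst G \<inter> X"
  by (simp add: induced_def)

lemma snd_induced [simp]: "snd (induced ends G X) = {e \<in> snd G. ends e \<subseteq> X}"
  by (simp add: induced_def)

lemma fst_remove [simp]: "fst (remove ends G A) = fst G - A"
  by (auto simp: remove_def)

lemma induced_remove:
  assumes "wf_mgraph ends G"
  shows "induced ends (remove ends G A) X = induced ends G (X - A)"
  using assms by (auto simp: remove_def induced_def wf_mgraph_def)

lemma remove_empty:
  assumes "wf_mgraph ends G"
  shows "remove ends G {} = G"
  using assms by (cases G) (auto simp: remove_def induced_def wf_mgraph_def)

lemma edges_between_remove:
  assumes "X \<union> Y \<subseteq> fst G - A"
  shows "edges_between ends (remove ends G A) X Y = edges_between ends G X Y"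
proof -
  have "{e \<in> snd (remove ends G A). \<exists>x\<in>X. \<exists>y\<in>Y. ends e = {x, y}}
      = {e \<in> snd G. \<exists>x\<in>X. \<exists>y\<in>Y. ends e = {x, y}}"
    using assms by (auto simp: remove_def)
  then show ?thesis
    by (simp add: edges_between_def)
qed

lemma edges_between_le_oneD:
  assumes "edges_between ends G X Y \<le> 1" "finite (snd G)"
    and "e1 \<in> snd G" "x1 \<in> X" "y1 \<in> Y" "ends e1 = {x1, y1}"
    and "e2 \<in> snd G" "x2 \<in> X" "y2 \<in> Y" "ends e2 = {x2, y2}"
  shows "e1 = e2"
  using assms card_le_Suc0_iff_eq[of "{e \<in> snd G. \<exists>x\<in>X. \<exists>y\<in>Y. ends e = {x, y}}"]
  by (auto simp: edges_between_def)

lemma edges_between_le_oneI: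
  assumes "finite (snd G)"
    and "\<And>e1 e2 x1 y1 x2 y2. \<lbrakk>e1 \<in> snd G; x1 \<in> X; y1 \<in> Y; ends e1 = {x1, y1};
      e2 \<in> snd G; x2 \<in> X; y2 \<in> Y; ends e2 = {x2, y2}\<rbrakk> \<Longrightarrow> e1 = e2"
  shows "edges_between ends G X Y \<le> 1"
  using assms card_le_Suc0_iff_eq[of "{e \<in> snd G. \<exists>x\<in>X. \<exists>y\<in>Y. ends e = {x, y}}"]
  by (auto simp: edges_between_def)

lemma is_cycleD:
  assumes "is_cycle ends H vs es"
  shows "set vs \<subseteq> fst H" "set es \<subseteq> snd H" "vs \<noteq> []"
  using assms by (auto simp: is_cycle_def)

lemma is_cycle_edge_ends:
  assumes "is_cycle ends H vs es" "e \<in> set es"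
  shows "ends e \<subseteq> set vs"
proof -
  obtain i where i: "i < length vs" "e = es ! i"
    using assms by (auto simp: in_set_conv_nth is_cycle_def)
  then have "(i + 1) mod length vs < length vs"
    by (metis mod_less_divisor gr_implies_not0 neq0_conv)
  moreover have "ends e = {vs ! i, vs ! ((i + 1) mod length vs)}"
    using assms(1) i by (simp add: is_cycle_def)
  ultimately show ?thesis
    using i(1) by simp
qed

lemma is_cycle_transfer:
  assumes "is_cycle ends H vs es" "set vs \<subseteq> fst K" "set es \<subseteq> snd K"
  shows "is_cycle ends K vs es"
  using assms unfolding is_cycle_def by blast

lemma is_cycle_subgraph:
  assumes "is_cycle ends H vs es" "subgraph ends H K"
  shows "is_cycle ends K vs es"
proof -
  have "set vs \<subseteq> fst K" "set es \<subseteq> snd K"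
    using is_cycleD(1,2)[OF assms(1)] assms(2) by (auto simp: subgraph_def)
  then show ?thesis
    using is_cycle_transfer[OF assms(1)] by blast
qed

lemma is_cycle_induced_iff:
  "is_cycle ends (induced ends H X) vs es \<longleftrightarrow> is_cycle ends H vs es \<and> set vs \<subseteq> X"
proof
  assume "is_cycle ends (induced ends H X) vs es"
  then show "is_cycle ends H vs es \<and> set vs \<subseteq> X"
    by (auto simp: is_cycle_def)
next
  assume "is_cycle ends H vs es \<and> set vs \<subseteq> X"
  then have cycle: "is_cycle ends H vs es" and sub: "set vs \<subseteq> X"
    by blast+
  have "e \<in> snd (induced ends H X)" if "e \<in> set es" for e
    using is_cycleD(2)[OF cycle] is_cycle_edge_ends[OF cycle that] sub that by auto
  moreover have "set vs \<subseteq> fst (induced ends H X)"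
    using is_cycleD(1)[OF cycle] sub by simp
  ultimately show "is_cycle ends (induced ends H X) vs es"
    using is_cycle_transfer[OF cycle] by blast
qed

lemma acyclic_induced_iff:
  "acyclic_mg ends (induced ends H X) \<longleftrightarrow> (\<forall>vs es. is_cycle ends H vs es \<longrightarrow> \<not> set vs \<subseteq> X)"
  by (auto simp: acyclic_mg_def is_cycle_induced_iff)

lemma is_fvs_iff:
  "is_fvs ends H X \<longleftrightarrow> X \<subseteq> fst H \<and> (\<forall>vs es. is_cycle ends H vs es \<longrightarrow> set vs \<inter> X \<noteq> {})"
proof -
  have "set vs \<subseteq> fst H - X \<longleftrightarrow> set vs \<inter> X = {}" if "is_cycle ends H vs es" for vs es
    using is_cycleD(1)[OF that] by blast
  then have "acyclic_mg ends (remove ends H X)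
      \<longleftrightarrow> (\<forall>vs es. is_cycle ends H vs es \<longrightarrow> set vs \<inter> X \<noteq> {})"
    unfolding remove_def acyclic_induced_iff by simp
  then show ?thesis
    by (simp add: is_fvs_def)
qed

lemma finite_is_fvs:
  assumes "finite (fst H)"
  shows "finite {X. is_fvs ends H X}"
proof (rule finite_subset)
  show "{X. is_fvs ends H X} \<subseteq> Pow (fst H)"
    by (auto simp: is_fvs_def)
qed (use assms in simp)

lemma fvs_le_card:
  assumes "finite (fst H)" "is_fvs ends H X"
  shows "fvs ends H \<le> card X"
  unfolding fvs_def using finite_is_fvs[OF assms(1)] assms(2) by simp

lemma obtain_minimum_fvs:
  assumes "finite (fst H)"
  obtains X where "is_fvs ends H X" "card X = fvs ends H"
proof -
  have "set vs \<inter> fst H \<noteq> {}" if "is_cycle ends H vs es" for vs es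
    using is_cycleD(1,3)[OF that] by (simp add: Int_absorb2)
  then have "is_fvs ends H (fst H)"
    by (simp add: is_fvs_iff)
  then have "fvs ends H \<in> card ` {X. is_fvs ends H X}"
    unfolding fvs_def using finite_is_fvs[OF assms] by (intro Min_in) auto
  then show ?thesis
    using that by auto
qed

lemma is_fvs_subgraph:
  assumes "subgraph ends H K" "is_fvs ends K X"
  shows "is_fvs ends H (X \<inter> fst H)"
  unfolding is_fvs_iff
proof (intro conjI allI impI)
  fix vs es
  assume cycle: "is_cycle ends H vs es"
  then have "is_cycle ends K vs es"
    using assms(1) by (rule is_cycle_subgraph)
  then have "set vs \<inter> X \<noteq> {}"
    using assms(2) unfolding is_fvs_iff by blast
  then show "set vs \<inter> (X \<inter> fst H) \<noteq> {}"
    using is_cycleD(1)[OF cycle] by blast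
qed simp

lemma fvs_subgraph_le:
  assumes "subgraph ends H K" "finite (fst K)"
  shows "fvs ends H \<le> fvs ends K"
proof -
  obtain X where X: "is_fvs ends K X" "card X = fvs ends K"
    using obtain_minimum_fvs[OF assms(2)] .
  have "finite (fst H)"
    using assms by (auto simp: subgraph_def intro: finite_subset)
  then have "fvs ends H \<le> card (X \<inter> fst H)"
    using fvs_le_card is_fvs_subgraph[OF assms(1) X(1)] by blast
  also have "\<dots> \<le> card X"
    using X(1) assms(2) by (intro card_mono) (auto simp: is_fvs_def intro: finite_subset)
  finally show ?thesis
    using X(2) by simp
qed

lemma certificate_card_le_fvs:
  assumes "is_certificate ends K C z H" "finite (fst K)"
  shows "card C \<le> fvs ends K"
proof -
  have "subgraph ends H K" "card C = fvs ends H"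
    using assms(1) by (simp_all add: is_certificate_def)
  then show ?thesis
    using fvs_subgraph_le assms(2) by metis
qed

definition component_of :: "('e \<Rightarrow> 'v set) \<Rightarrow> ('v,'e) mgraph \<Rightarrow> 'v \<Rightarrow> 'v set" where
  "component_of ends H u = {v \<in> fst H. (u, v) \<in> (adj_rel ends H)\<^sup>*}"

lemma components_eq_image: "components ends H = component_of ends H ` fst H"
  by (simp add: components_def component_of_def)

lemma component_of_in_components:
  "u \<in> fst H \<Longrightarrow> component_of ends H u \<in> components ends H"
  by (simp add: components_eq_image)

lemma in_component_of_self: "u \<in> fst H \<Longrightarrow> u \<in> component_of ends H u"
  by (simp add: component_of_def)

lemma components_subset: "T \<in> components ends H \<Longrightarrow> T \<subseteq> fst H"
  by (auto simp: components_eq_image component_of_def)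

lemma sym_adj_rel: "sym (adj_rel ends H)"
  by (auto simp: adj_rel_def sym_def insert_commute)

lemma component_eq_component_of:
  assumes "T \<in> components ends H" "u \<in> T"
  shows "T = component_of ends H u"
proof -
  obtain c where c: "T = component_of ends H c"
    using assms(1) by (auto simp: components_eq_image)
  then have "(c, u) \<in> (adj_rel ends H)\<^sup>*"
    using assms(2) by (simp add: component_of_def)
  then have "(u, c) \<in> (adj_rel ends H)\<^sup>*"
    by (rule symD[OF sym_rtrancl[OF sym_adj_rel]])
  then show ?thesis
    using c assms(2) by (auto simp: component_of_def intro: rtrancl_trans)
qed

lemma component_closed:
  assumes "T \<in> components ends H" "u \<in> T" "e \<in> snd H" "ends e = {u, w}" "w \<in> fst H"
  shows "w \<in> T"
proof -
  have "(u, w) \<in> adj_rel ends H"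
    using assms(3,4) by (auto simp: adj_rel_def)
  then show ?thesis
    using assms component_eq_component_of[OF assms(1,2)] in_component_of_self[of u H ends]
    by (auto simp: component_of_def components_subset)
qed

lemma component_subset_closed:
  assumes "T \<in> components ends H" "x \<in> T" "x \<in> X"
    and "\<And>e u w. e \<in> snd H \<Longrightarrow> ends e = {u, w} \<Longrightarrow> u \<in> X \<Longrightarrow> w \<in> X"
  shows "T \<subseteq> X"
proof
  fix v
  assume "v \<in> T"
  then have "(x, v) \<in> (adj_rel ends H)\<^sup>*"
    using component_eq_component_of[OF assms(1,2)] by (simp add: component_of_def)
  then show "v \<in> X"
    by (induction rule: rtrancl_induct) (use assms(3,4) in \<open>auto simp: adj_rel_def\<close>)
qed

lemma induced_component_subset:
  "T \<in> components ends (induced ends G F) \<Longrightarrow> T \<subseteq> fst G \<inter> F"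
  using components_subset by fastforce

lemma induced_component_closed:
  assumes "wf_mgraph ends G" "T \<in> components ends (induced ends G F)"
    and "u \<in> T" "e \<in> snd G" "ends e = {u, w}" "w \<in> F"
  shows "w \<in> T"
proof (rule component_closed[OF assms(2,3) _ assms(5)])
  have "u \<in> F"
    using induced_component_subset[OF assms(2)] assms(3) by blast
  then show "e \<in> snd (induced ends G F)"
    using assms(4-6) by simp
  show "w \<in> fst (induced ends G F)"
    using assms(1,4-6) by (auto simp: wf_mgraph_def)
qed

lemma cyclic_list_boundary:
  assumes "i0 < length xs" "P (xs ! i0)" "j0 < length xs" "\<not> P (xs ! j0)"
  shows "\<exists>i < length xs. P (xs ! i) \<and> \<not> P (xs ! ((i + 1) mod length xs))"
proof (rule ccontr)
  let ?k = "length xs"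
  have pos: "0 < ?k"
    using assms(1) by linarith
  assume "\<not> ?thesis"
  then have step: "P (xs ! ((i + 1) mod ?k))" if "i < ?k" "P (xs ! i)" for i
    using that by blast
  have "P (xs ! ((i0 + m) mod ?k))" for m
  proof (induction m)
    case 0
    then show ?case
      using assms(1,2) by simp
  next
    case (Suc m)
    have "(i0 + Suc m) mod ?k = ((i0 + m) mod ?k + 1) mod ?k"
      by (simp add: mod_Suc_eq)
    moreover have "(i0 + m) mod ?k < ?k"
      using pos by simp
    ultimately show ?case
      using step Suc.IH by metis
  qed
  from this[of "j0 + ?k - i0"] show False
    using assms(1,3,4) by simp
qed

lemma is_cycle_crosses_twice:
  assumes "is_cycle ends H vs es" "v \<in> set vs" "v \<in> T" "b \<in> set vs" "b \<notin> T"
  obtains e1 e2 t1 t2 y1 y2 where "e1 \<in> set es" "e2 \<in> set es" "e1 \<noteq> e2"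
    "t1 \<in> T" "t2 \<in> T" "y1 \<in> set vs - T" "y2 \<in> set vs - T"
    "ends e1 = {t1, y1}" "ends e2 = {t2, y2}"
proof -
  let ?k = "length vs"
  let ?next = "\<lambda>i. (i + 1) mod ?k"
  have cycle: "length es = ?k" "distinct es"
    "\<And>i. i < ?k \<Longrightarrow> ends (es ! i) = {vs ! i, vs ! ?next i}"
    using assms(1) unfolding is_cycle_def by blast+
  obtain i0 j0 where "i0 < ?k" "vs ! i0 = v" "j0 < ?k" "vs ! j0 = b"
    using assms(2,4) by (metis in_set_conv_nth)
  then obtain i j where i: "i < ?k" "vs ! i \<in> T" "vs ! ?next i \<notin> T"
    and j: "j < ?k" "vs ! j \<notin> T" "vs ! ?next j \<in> T"
    using cyclic_list_boundary[of i0 vs "\<lambda>x. x \<in> T" j0]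
      cyclic_list_boundary[of j0 vs "\<lambda>x. x \<notin> T" i0] assms(3,5) by blast
  have "0 < ?k"
    using i(1) by linarith
  then have "?next i < ?k" "?next j < ?k"
    by simp_all
  moreover have "es ! i \<noteq> es ! j"
    using i j cycle(1,2) by (metis nth_eq_iff_index_eq)
  ultimately show ?thesis
    using that[of "es ! i" "es ! j" "vs ! i" "vs ! ?next j" "vs ! ?next i" "vs ! j"]
      i j cycle(1,3) by (simp add: insert_commute)
qed

definition pendant_forest :: "('e \<Rightarrow> 'v set) \<Rightarrow> ('v,'e) mgraph \<Rightarrow> 'v set \<Rightarrow> 'v set \<Rightarrow> bool" where
  "pendant_forest ends G F R \<longleftrightarrow> acyclic_mg ends (induced ends G F) \<and>
     (\<forall>T \<in> components ends (induced ends G F). edges_between ends G T R \<le> 1)"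

lemma is_fvc_iff_pendant_forest:
  "is_fvc ends G C F \<longleftrightarrow>
     C \<subseteq> fst G \<and> F \<subseteq> fst G \<and> C \<inter> F = {} \<and> pendant_forest ends G F (fst G - (C \<union> F))"
  by (simp add: is_fvc_def pendant_forest_def)

lemma pendant_forest_remove_iff:
  assumes "wf_mgraph ends G" "F \<inter> A = {}" "R \<subseteq> fst G - A"
  shows "pendant_forest ends (remove ends G A) F R \<longleftrightarrow> pendant_forest ends G F R"
proof -
  have induced: "induced ends (remove ends G A) F = induced ends G F"
    using induced_remove[OF assms(1)] assms(2) by (simp add: Diff_triv)
  have "edges_between ends (remove ends G A) T R = edges_between ends G T R"
    if "T \<in> components ends (induced ends G F)" for T
    using components_subset[OF that] assms(2,3) by (intro edges_between_remove) auto
  then show ?thesis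
    by (simp add: pendant_forest_def induced)
qed

lemma pendant_forest_unique_exit:
  assumes "wf_mgraph ends G" "pendant_forest ends G F R" "T \<in> components ends (induced ends G F)"
    and "e1 \<in> snd G" "t1 \<in> T" "r1 \<in> R" "ends e1 = {t1, r1}"
    and "e2 \<in> snd G" "t2 \<in> T" "r2 \<in> R" "ends e2 = {t2, r2}"
  shows "e1 = e2"
  using assms edges_between_le_oneD[of ends G T R]
  by (auto simp: pendant_forest_def wf_mgraph_def)

lemma obtain_induced_component:
  assumes "u \<in> fst G" "u \<in> F"
  obtains T where "T \<in> components ends (induced ends G F)" "u \<in> T"
  using assms component_of_in_components[of u "induced ends G F" ends]
    in_component_of_self[of u "induced ends G F" ends] by auto

text \<open>A cycle that leaves a tree of \<open>G[F1]\<close> must cross twice into \<open>F2 \<subseteq> R\<close>, but the tree has only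
  one edge to \<open>R\<close>.\<close>
lemma acyclic_induced_Un:
  assumes "wf_mgraph ends G" "pendant_forest ends G F1 R"
    and "acyclic_mg ends (induced ends G F2)" "F2 \<subseteq> R"
  shows "acyclic_mg ends (induced ends G (F1 \<union> F2))"
  unfolding acyclic_induced_iff
proof (intro allI impI notI)
  fix vs es
  assume cycle: "is_cycle ends G vs es" and sub: "set vs \<subseteq> F1 \<union> F2"
  have "\<not> set vs \<subseteq> F2"
    using assms(3) cycle unfolding acyclic_induced_iff by blast
  then obtain v where v: "v \<in> set vs" "v \<in> F1"
    using sub by blast
  moreover have "v \<in> fst G"
    using is_cycleD(1)[OF cycle] v(1) by blast
  ultimately obtain T where T: "T \<in> components ends (induced ends G F1)" "v \<in> T"
    by (metis obtain_induced_component)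
  have "\<not> set vs \<subseteq> F1"
    using assms(2) cycle unfolding pendant_forest_def acyclic_induced_iff by blast
  then obtain b where "b \<in> set vs" "b \<notin> T"
    using induced_component_subset[OF T(1)] by blast
  then obtain e1 e2 t1 t2 y1 y2 where crossing: "e1 \<in> set es" "e2 \<in> set es" "e1 \<noteq> e2"
    "t1 \<in> T" "t2 \<in> T" "y1 \<in> set vs - T" "y2 \<in> set vs - T" "ends e1 = {t1, y1}" "ends e2 = {t2, y2}"
    using is_cycle_crosses_twice[OF cycle v(1) T(2)] by blast
  have exit: "e \<in> snd G \<and> y \<in> R"
    if "y \<in> set vs - T" "t \<in> T" "e \<in> set es" "ends e = {t, y}" for y t e
  proof
    show "e \<in> snd G"
      using is_cycleD(2)[OF cycle] that(3) by blast
    then have "y \<notin> F1"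
      using induced_component_closed[OF assms(1) T(1) that(2) _ that(4)] that(1) by blast
    then show "y \<in> R"
      using sub that(1) assms(4) by blast
  qed
  have "e1 \<in> snd G" "y1 \<in> R" "e2 \<in> snd G" "y2 \<in> R"
    using exit crossing by blast+
  then show False
    using pendant_forest_unique_exit[OF assms(1,2) T(1)] crossing by blast
qed

text \<open>The exit edge of the tree \<open>T1\<close> leaves \<open>F1 \<union> F2\<close>, so no edge of \<open>G[F1 \<union> F2]\<close> leaves \<open>T1\<close>.\<close>
lemma component_Un_subset_tree:
  assumes "wf_mgraph ends G" "pendant_forest ends G F1 R" "F2 \<subseteq> R"
    and "T \<in> components ends (induced ends G (F1 \<union> F2))" "x \<in> T"
    and "T1 \<in> components ends (induced ends G F1)" "x \<in> T1"
    and "e \<in> snd G" "ends e = {x, y}" "y \<in> R" "y \<notin> F2"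
  shows "T \<subseteq> T1"
proof (rule component_subset_closed[OF assms(4,5,7)])
  fix e' u w
  assume e': "e' \<in> snd (induced ends G (F1 \<union> F2))" "ends e' = {u, w}" and "u \<in> T1"
  have "x \<in> F1"
    using induced_component_subset[OF assms(6)] assms(7) by blast
  show "w \<in> T1"
  proof (cases "w \<in> F1")
    case True
    then show ?thesis
      using induced_component_closed[OF assms(1,6) \<open>u \<in> T1\<close> _ e'(2)] e'(1) by simp
  next
    case False
    then have "w \<in> F2"
      using e' by auto
    then have "e' = e"
      using pendant_forest_unique_exit[OF assms(1,2,6) _ \<open>u \<in> T1\<close> _ e'(2) assms(8,7,10,9)]
        e'(1) assms(3) by auto
    then have "w = x \<or> w = y"
      using e'(2) assms(9) by (auto simp: doubleton_eq_iff)
    then show ?thesis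
      using False \<open>w \<in> F2\<close> \<open>x \<in> F1\<close> assms(11) by blast
  qed
qed

lemma pendant_tree_exit_vertex:
  assumes "wf_mgraph ends G" "pendant_forest ends G F R" "F \<inter> R = {}"
    and "T \<in> components ends (induced ends G F)"
    and "e \<in> snd G" "u \<in> T" "w \<in> R" "ends e = {u, w}"
    and "e0 \<in> snd G" "a \<in> T" "s \<in> R" "ends e0 = {a, s}"
  shows "w = s"
proof -
  have "e = e0"
    using pendant_forest_unique_exit[OF assms(1,2,4) assms(5-12)] .
  moreover have "u \<noteq> s"
    using induced_component_subset[OF assms(4)] assms(3,6,11) by blast
  ultimately show ?thesis
    using assms(8,12) by (auto simp: doubleton_eq_iff)
qed

definition with_attached_trees :: "('e \<Rightarrow> 'v set) \<Rightarrow> ('v,'e) mgraph \<Rightarrow> 'v set \<Rightarrow> 'v set \<Rightarrow> 'v set" where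
  "with_attached_trees ends G F S = S \<union>
     \<Union>{T \<in> components ends (induced ends G F). \<exists>e \<in> snd G. \<exists>a \<in> T. \<exists>s \<in> S. ends e = {a, s}}"

text \<open>A tree of \<open>G[F1]\<close> attached to \<open>S \<subseteq> R\<close> has no further edge to \<open>R\<close>.\<close>
lemma with_attached_trees_closed:
  assumes "wf_mgraph ends G" "pendant_forest ends G F1 R" "F1 \<inter> R = {}" "F2 \<subseteq> R"
    and S: "S \<in> components ends (induced ends G F2)"
    and e: "e \<in> snd (induced ends G (F1 \<union> F2))" "ends e = {u, w}"
    and u: "u \<in> with_attached_trees ends G F1 S"
  shows "w \<in> with_attached_trees ends G F1 S"
proof -
  have "e \<in> snd G" "w \<in> fst G" "w \<in> F1 \<union> F2"
    using assms(1) e by (auto simp: wf_mgraph_def)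
  have SR: "S \<subseteq> R"
    using induced_component_subset[OF S] assms(4) by blast
  consider "u \<in> S" "w \<in> F2" | "u \<in> S" "w \<in> F1"
    | T1 e0 a s where "T1 \<in> components ends (induced ends G F1)" "u \<in> T1"
      "e0 \<in> snd G" "a \<in> T1" "s \<in> S" "ends e0 = {a, s}"
    using u \<open>w \<in> F1 \<union> F2\<close> unfolding with_attached_trees_def by blast
  then show ?thesis
  proof cases
    case 1
    then show ?thesis
      using induced_component_closed[OF assms(1) S _ \<open>e \<in> snd G\<close> e(2)]
      unfolding with_attached_trees_def by blast
  next
    case 2
    obtain T1 where T1: "T1 \<in> components ends (induced ends G F1)" "w \<in> T1"
      using \<open>w \<in> fst G\<close> 2(2) by (rule obtain_induced_component)
    moreover have "ends e = {w, u}"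
      using e(2) by auto
    ultimately show ?thesis
      unfolding with_attached_trees_def using \<open>e \<in> snd G\<close> 2(1) by blast
  next
    case (3 T1 e0 a s)
    show ?thesis
    proof (cases "w \<in> F1")
      case True
      then have "w \<in> T1"
        using induced_component_closed[OF assms(1) 3(1,2) \<open>e \<in> snd G\<close> e(2)] by simp
      then show ?thesis
        unfolding with_attached_trees_def using 3 by blast
    next
      case False
      then have "w \<in> R"
        using \<open>w \<in> F1 \<union> F2\<close> assms(4) by blast
      then have "w = s"
        using pendant_tree_exit_vertex[OF assms(1-3) 3(1) \<open>e \<in> snd G\<close> 3(2) _ e(2) 3(3,4) _ 3(6)]
          3(5) SR by blast
      then show ?thesis
        unfolding with_attached_trees_def using 3(5) by blast
    qed
  qed
qed

lemma component_Un_inter_connected: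
  assumes "wf_mgraph ends G" "pendant_forest ends G F1 R" "F1 \<inter> R = {}" "F2 \<subseteq> R"
    and "T \<in> components ends (induced ends G (F1 \<union> F2))" "x \<in> T"
    and "S \<in> components ends (induced ends G F2)" "x \<in> S"
  shows "T \<inter> F2 \<subseteq> S"
proof -
  have "x \<in> with_attached_trees ends G F1 S"
    using assms(8) by (simp add: with_attached_trees_def)
  then have "T \<subseteq> with_attached_trees ends G F1 S"
    using component_subset_closed[OF assms(5,6)] with_attached_trees_closed[OF assms(1-4,7)]
    by meson
  moreover have "with_attached_trees ends G F1 S \<inter> F2 \<subseteq> S"
    unfolding with_attached_trees_def using induced_component_subset assms(3,4) by blast
  ultimately show ?thesis
    by blast
qed

lemma component_Un_exit_from_F1:
  assumes "wf_mgraph ends G" "pendant_forest ends G F1 R1" "F2 \<subseteq> R1" "R2 \<subseteq> R1 - F2"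
    and T: "T \<in> components ends (induced ends G (F1 \<union> F2))"
    and e1: "e1 \<in> snd G" "x1 \<in> T" "y1 \<in> R2" "ends e1 = {x1, y1}" "x1 \<in> F1"
    and e2: "e2 \<in> snd G" "x2 \<in> T" "y2 \<in> R2" "ends e2 = {x2, y2}"
  shows "e1 = e2"
proof -
  have "x1 \<in> fst G"
    using induced_component_subset[OF T] e1(2) by blast
  then obtain T1 where T1: "T1 \<in> components ends (induced ends G F1)" "x1 \<in> T1"
    using e1(5) by (rule obtain_induced_component)
  have "T \<subseteq> T1"
    using component_Un_subset_tree[OF assms(1-3) T e1(2) T1 e1(1,4)] e1(3) assms(4) by blast
  then show "e1 = e2"
    using pendant_forest_unique_exit[OF assms(1,2) T1(1) e1(1) T1(2) _ e1(4) e2(1) _ _ e2(4)]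
      e1(3) e2(2,3) assms(4) by blast
qed

lemma pendant_forest_Un:
  assumes "wf_mgraph ends G" "pendant_forest ends G F1 R1" "pendant_forest ends G F2 R2"
    and "F1 \<inter> R1 = {}" "F2 \<subseteq> R1" "R2 \<subseteq> R1 - F2"
  shows "pendant_forest ends G (F1 \<union> F2) R2"
  unfolding pendant_forest_def
proof (intro conjI ballI)
  show "acyclic_mg ends (induced ends G (F1 \<union> F2))"
    using acyclic_induced_Un[OF assms(1,2) _ assms(5)] assms(3) by (simp add: pendant_forest_def)
next
  fix T
  assume T: "T \<in> components ends (induced ends G (F1 \<union> F2))"
  have TF: "T \<subseteq> fst G \<inter> (F1 \<union> F2)"
    by (rule induced_component_subset[OF T])
  show "edges_between ends G T R2 \<le> 1"
  proof (rule edges_between_le_oneI)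
    show "finite (snd G)"
      using assms(1) by (simp add: wf_mgraph_def)
  next
    fix e1 e2 x1 y1 x2 y2
    assume e1: "e1 \<in> snd G" "x1 \<in> T" "y1 \<in> R2" "ends e1 = {x1, y1}"
      and e2: "e2 \<in> snd G" "x2 \<in> T" "y2 \<in> R2" "ends e2 = {x2, y2}"
    consider "x1 \<in> F1" | "x2 \<in> F1" | "x1 \<in> F2" "x2 \<in> F2"
      using TF e1(2) e2(2) by blast
    then show "e1 = e2"
    proof cases
      case 1
      then show ?thesis
        using component_Un_exit_from_F1[OF assms(1,2,5,6) T e1 _ e2] by blast
    next
      case 2
      then show ?thesis
        using component_Un_exit_from_F1[OF assms(1,2,5,6) T e2 _ e1] by blast
    next
      case 3
      have "x1 \<in> fst G"
        using TF e1(2) by blast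
      then obtain S where S: "S \<in> components ends (induced ends G F2)" "x1 \<in> S"
        using 3(1) by (rule obtain_induced_component)
      have "x2 \<in> S"
        using component_Un_inter_connected[OF assms(1,2,4,5) T e1(2) S] e2(2) 3(2) by blast
      then show ?thesis
        using pendant_forest_unique_exit[OF assms(1,3) S(1) e1(1) S(2) e1(3,4) e2(1) _ e2(3,4)] by blast
    qed
  qed
qed

lemma is_fvc_combine:
  assumes "wf_mgraph ends G" "is_fvc ends G C1 F1"
    and "is_fvc ends (remove ends G (C1 \<union> F1)) C2 F2"
  shows "is_fvc ends G (C1 \<union> C2) (F1 \<union> F2)"
proof -
  let ?R1 = "fst G - (C1 \<union> F1)"
  let ?R2 = "?R1 - (C2 \<union> F2)"
  have fvc1: "C1 \<subseteq> fst G" "F1 \<subseteq> fst G" "C1 \<inter> F1 = {}" "pendant_forest ends G F1 ?R1"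
    using assms(2) by (simp_all add: is_fvc_iff_pendant_forest)
  have fvc2: "C2 \<subseteq> ?R1" "F2 \<subseteq> ?R1" "C2 \<inter> F2 = {}"
    and "pendant_forest ends (remove ends G (C1 \<union> F1)) F2 ?R2"
    using assms(3) by (simp_all add: is_fvc_iff_pendant_forest)
  moreover have "F2 \<inter> (C1 \<union> F1) = {}" "?R2 \<subseteq> fst G - (C1 \<union> F1)"
    using fvc2(2) by blast+
  ultimately have "pendant_forest ends G F2 ?R2"
    using pendant_forest_remove_iff[OF assms(1)] by simp
  then have "pendant_forest ends G (F1 \<union> F2) ?R2"
    by (rule pendant_forest_Un[OF assms(1) fvc1(4)]) (use fvc2(2) in blast)+
  moreover have "?R2 = fst G - ((C1 \<union> C2) \<union> (F1 \<union> F2))"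
    by blast
  ultimately show ?thesis
    using fvc1 fvc2 by (auto simp: is_fvc_iff_pendant_forest)
qed

lemma component_of_disjoint_union:
  assumes "\<forall>e \<in> E1. ends e \<subseteq> V1" "\<forall>e \<in> E2. ends e \<subseteq> V2" "V1 \<inter> V2 = {}" "u \<in> V1"
  shows "component_of ends (V1 \<union> V2, E1 \<union> E2) u = component_of ends (V1, E1) u"
proof -
  let ?r1 = "adj_rel ends (V1, E1)" and ?r2 = "adj_rel ends (V2, E2)"
  have union: "adj_rel ends (V1 \<union> V2, E1 \<union> E2) = ?r1 \<union> ?r2"
    by (auto simp: adj_rel_def)
  have "?r1 \<subseteq> V1 \<times> V1" "?r2 \<subseteq> V2 \<times> V2"
    using assms(1,2) by (auto simp: adj_rel_def)
  have stays: "v \<in> V1" if "(u, v) \<in> ?r1\<^sup>*" for v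
    using that \<open>?r1 \<subseteq> V1 \<times> V1\<close> assms(4) by (induction rule: rtrancl_induct) auto
  then have separated: "\<forall>x y. (u, x) \<in> ?r1\<^sup>* \<longrightarrow> (x, y) \<in> ?r2 \<longrightarrow> x = y"
    using \<open>?r2 \<subseteq> V2 \<times> V2\<close> assms(3) by blast
  have "(u, v) \<in> (?r1 \<union> ?r2)\<^sup>* \<longleftrightarrow> (u, v) \<in> ?r1\<^sup>*" for v
    using rtrancl_Un_separatorE[OF _ separated] in_rtrancl_UnI by metis
  with stays show ?thesis
    by (auto simp: component_of_def union)
qed

lemma components_disjoint_union:
  assumes "\<forall>e \<in> E1. ends e \<subseteq> V1" "\<forall>e \<in> E2. ends e \<subseteq> V2" "V1 \<inter> V2 = {}"
  shows "components ends (V1 \<union> V2, E1 \<union> E2) = components ends (V1, E1) \<union> components ends (V2, E2)"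
proof -
  have "component_of ends (V1 \<union> V2, E1 \<union> E2) u = component_of ends (V2, E2) u" if "u \<in> V2" for u
    using component_of_disjoint_union[of E2 ends V2 E1 V1] assms that by (simp add: Un_commute Int_commute)
  then show ?thesis
    using component_of_disjoint_union[OF assms] by (auto simp: components_eq_image image_Un)
qed

text \<open>Without \<open>ends e \<noteq> {}\<close> an edge of \<open>E2\<close> would lie in every induced subgraph.\<close>
lemma induced_disjoint_union:
  assumes "\<forall>e \<in> E2. ends e \<subseteq> V2 \<and> ends e \<noteq> {}" "V1 \<inter> V2 = {}" "K \<subseteq> V1"
  shows "induced ends (V1 \<union> V2, E1 \<union> E2) K = induced ends (V1, E1) K"
proof -
  have "e \<notin> E2" if "ends e \<subseteq> K" for e
    using assms that by blast
  then show ?thesis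
    using assms(3) by (auto simp: induced_def)
qed

lemma is_cycle_disjoint_union_part:
  assumes "is_cycle ends (V1 \<union> V2, E1 \<union> E2) vs es" "set vs \<subseteq> V1"
    and "\<forall>e \<in> E2. ends e \<subseteq> V2 \<and> ends e \<noteq> {}" "V1 \<inter> V2 = {}"
  shows "is_cycle ends (V1, E1) vs es"
proof (rule is_cycle_transfer[OF assms(1)])
  show "set vs \<subseteq> fst (V1, E1)"
    using assms(2) by simp
  have "e \<in> E1" if "e \<in> set es" for e
  proof -
    have "e \<in> E1 \<union> E2" "ends e \<subseteq> V1"
      using is_cycleD(2)[OF assms(1)] is_cycle_edge_ends[OF assms(1) that] assms(2) that by auto
    then show ?thesis
      using assms(3,4) by blast
  qed
  then show "set es \<subseteq> snd (V1, E1)"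
    by auto
qed

lemma is_cycle_disjoint_union:
  assumes "is_cycle ends (V1 \<union> V2, E1 \<union> E2) vs es"
    and "\<forall>e \<in> E1. ends e \<subseteq> V1 \<and> ends e \<noteq> {}" "\<forall>e \<in> E2. ends e \<subseteq> V2 \<and> ends e \<noteq> {}"
    and "V1 \<inter> V2 = {}"
  shows "is_cycle ends (V1, E1) vs es \<or> is_cycle ends (V2, E2) vs es"
proof -
  have vs: "set vs \<subseteq> V1 \<union> V2"
    using is_cycleD(1)[OF assms(1)] by simp
  have "set vs \<subseteq> V1 \<or> set vs \<subseteq> V2"
  proof (rule ccontr)
    assume "\<not> ?thesis"
    then obtain v b where "v \<in> set vs" "v \<in> V1" "b \<in> set vs" "b \<notin> V1"
      using vs by blast
    then obtain e t y where "e \<in> set es" "t \<in> V1" "y \<in> set vs - V1" "ends e = {t, y}"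
      using is_cycle_crosses_twice[OF assms(1)] by metis
    moreover have "e \<in> E1 \<union> E2"
      using is_cycleD(2)[OF assms(1)] \<open>e \<in> set es\<close> by auto
    ultimately show False
      using vs assms(2-4) by blast
  qed
  moreover have "is_cycle ends (V2 \<union> V1, E2 \<union> E1) vs es"
    using assms(1) by (simp add: Un_commute)
  ultimately show ?thesis
    using is_cycle_disjoint_union_part assms by (metis Int_commute)
qed

lemma is_fvs_disjoint_union:
  assumes "\<forall>e \<in> E1. ends e \<subseteq> V1 \<and> ends e \<noteq> {}" "\<forall>e \<in> E2. ends e \<subseteq> V2 \<and> ends e \<noteq> {}"
    and "V1 \<inter> V2 = {}" "is_fvs ends (V1, E1) X1" "is_fvs ends (V2, E2) X2"
  shows "is_fvs ends (V1 \<union> V2, E1 \<union> E2) (X1 \<union> X2)"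
  unfolding is_fvs_iff
proof (intro conjI allI impI)
  show "X1 \<union> X2 \<subseteq> fst (V1 \<union> V2, E1 \<union> E2)"
    using assms(4,5) by (auto simp: is_fvs_def)
  fix vs es
  assume "is_cycle ends (V1 \<union> V2, E1 \<union> E2) vs es"
  then have "is_cycle ends (V1, E1) vs es \<or> is_cycle ends (V2, E2) vs es"
    using is_cycle_disjoint_union assms(1-3) by blast
  then show "set vs \<inter> (X1 \<union> X2) \<noteq> {}"
    using assms(4,5) unfolding is_fvs_iff by blast
qed

lemma fvs_disjoint_union:
  assumes "\<forall>e \<in> E1. ends e \<subseteq> V1 \<and> ends e \<noteq> {}" "\<forall>e \<in> E2. ends e \<subseteq> V2 \<and> ends e \<noteq> {}"
    and "V1 \<inter> V2 = {}" "finite V1" "finite V2"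
  shows "fvs ends (V1 \<union> V2, E1 \<union> E2) = fvs ends (V1, E1) + fvs ends (V2, E2)"
proof (rule antisym)
  obtain X1 X2 where X1: "is_fvs ends (V1, E1) X1" "card X1 = fvs ends (V1, E1)"
    and X2: "is_fvs ends (V2, E2) X2" "card X2 = fvs ends (V2, E2)"
    using obtain_minimum_fvs assms(4,5) by (metis fst_conv)
  have "X1 \<subseteq> V1" "X2 \<subseteq> V2"
    using X1(1) X2(1) by (auto simp: is_fvs_def)
  then have "card (X1 \<union> X2) = card X1 + card X2"
    using assms(3-5) by (intro card_Un_disjoint) (auto intro: finite_subset)
  then show "fvs ends (V1 \<union> V2, E1 \<union> E2) \<le> fvs ends (V1, E1) + fvs ends (V2, E2)"
    using fvs_le_card[OF _ is_fvs_disjoint_union[OF assms(1-3) X1(1) X2(1)]] assms(4,5) X1(2) X2(2)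
    by simp
next
  let ?H = "(V1 \<union> V2, E1 \<union> E2)"
  obtain X where X: "is_fvs ends ?H X" "card X = fvs ends ?H"
    using obtain_minimum_fvs assms(4,5) by (metis finite_Un fst_conv)
  have "subgraph ends (V1, E1) ?H" "subgraph ends (V2, E2) ?H"
    using assms(1,2) by (auto simp: subgraph_def)
  then have "fvs ends (V1, E1) \<le> card (X \<inter> V1)" "fvs ends (V2, E2) \<le> card (X \<inter> V2)"
    using fvs_le_card is_fvs_subgraph X(1) assms(4,5) by (metis fst_conv)+
  moreover have "card (X \<inter> V1) + card (X \<inter> V2) = card (X \<inter> V1 \<union> X \<inter> V2)"
    using assms(3-5) by (intro card_Un_disjoint[symmetric]) auto
  moreover have "card (X \<inter> V1 \<union> X \<inter> V2) \<le> card X"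
    using X(1) assms(4,5) by (intro card_mono) (auto simp: is_fvs_def intro: finite_subset)
  ultimately show "fvs ends (V1, E1) + fvs ends (V2, E2) \<le> fvs ends ?H"
    using X(2) by linarith
qed

lemma is_certificate_inducedD:
  assumes "wf_mgraph ends G" "is_certificate ends (induced ends G X) C z (V, E)"
  shows "V \<subseteq> fst G \<inter> X" "E \<subseteq> {e \<in> snd G. ends e \<subseteq> X}" "\<forall>e \<in> E. ends e \<subseteq> V \<and> ends e \<noteq> {}"
proof -
  show "V \<subseteq> fst G \<inter> X" "E \<subseteq> {e \<in> snd G. ends e \<subseteq> X}"
    using assms(2) by (auto simp: is_certificate_def subgraph_def)
  moreover have "ends e \<noteq> {}" if "e \<in> snd G" for e
    using assms(1) that by (fastforce simp: wf_mgraph_def)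
  ultimately show "\<forall>e \<in> E. ends e \<subseteq> V \<and> ends e \<noteq> {}"
    using assms(2) by (auto simp: is_certificate_def subgraph_def)
qed

lemma is_certificate_disjoint_union:
  assumes "wf_mgraph ends G" "X1 \<inter> X2 = {}"
    and cert1: "is_certificate ends (induced ends G X1) C1 z (V1, E1)"
    and cert2: "is_certificate ends (induced ends G X2) C2 z (V2, E2)"
  shows "is_certificate ends (induced ends G (X1 \<union> X2)) (C1 \<union> C2) z (V1 \<union> V2, E1 \<union> E2)"
proof -
  let ?H = "(V1 \<union> V2, E1 \<union> E2)"
  note edges1 = is_certificate_inducedD[OF assms(1) cert1] and edges2 = is_certificate_inducedD[OF assms(1) cert2]
  have disjoint: "V1 \<inter> V2 = {}"
    using edges1(1) edges2(1) assms(2) by blast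
  have finite: "finite V1" "finite V2"
    using edges1(1) edges2(1) assms(1) by (auto simp: wf_mgraph_def intro: finite_subset)
  have fvs1: "is_fvs ends (V1, E1) C1" "card C1 = fvs ends (V1, E1)"
    and fvs2: "is_fvs ends (V2, E2) C2" "card C2 = fvs ends (V2, E2)"
    using cert1 cert2 by (simp_all add: is_certificate_def)
  have C: "C1 \<subseteq> V1" "C2 \<subseteq> V2"
    using fvs1(1) fvs2(1) by (auto simp: is_fvs_def)
  have "subgraph ends ?H (induced ends G (X1 \<union> X2))"
    using edges1 edges2 by (auto simp: subgraph_def)
  moreover have "is_fvs ends ?H (C1 \<union> C2)"
    by (rule is_fvs_disjoint_union[OF edges1(3) edges2(3) disjoint fvs1(1) fvs2(1)])
  moreover have "card (C1 \<union> C2) = fvs ends ?H"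
    using card_Un_disjoint[of C1 C2] C disjoint finite fvs1(2) fvs2(2)
      fvs_disjoint_union[OF edges1(3) edges2(3) disjoint finite]
    by (auto intro: finite_subset)
  moreover have "fvs ends (induced ends ?H K) = card ((C1 \<union> C2) \<inter> K) \<and> card ((C1 \<union> C2) \<inter> K) \<le> z"
    if "K \<in> components ends ?H" for K
  proof -
    have "K \<in> components ends (V1, E1) \<or> K \<in> components ends (V2, E2)"
      using that components_disjoint_union[of E1 ends V1 E2 V2] edges1(3) edges2(3) disjoint by blast
    then show ?thesis
    proof
      assume K: "K \<in> components ends (V1, E1)"
      then have "induced ends ?H K = induced ends (V1, E1) K" "(C1 \<union> C2) \<inter> K = C1 \<inter> K"
        using induced_disjoint_union[OF edges2(3) disjoint] components_subset[OF K] C(2) disjoint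
        by auto
      then show ?thesis
        using cert1 K by (simp add: is_certificate_def)
    next
      assume K: "K \<in> components ends (V2, E2)"
      have "?H = (V2 \<union> V1, E2 \<union> E1)" "V2 \<inter> V1 = {}"
        using disjoint by auto
      then have "induced ends ?H K = induced ends (V2, E2) K" "(C1 \<union> C2) \<inter> K = C2 \<inter> K"
        using induced_disjoint_union[OF edges1(3)] components_subset[OF K] C(1) by auto
      then show ?thesis
        using cert2 K by (simp add: is_certificate_def)
    qed
  qed
  ultimately show ?thesis
    by (simp add: is_certificate_def)
qed

lemma is_z_antler_combine:
  assumes "wf_mgraph ends G" "is_z_antler ends z G C1 F1"
    and "is_z_antler ends z (remove ends G (C1 \<union> F1)) C2 F2"
  shows "is_z_antler ends z G (C1 \<union> C2) (F1 \<union> F2)"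
proof -
  have fvc1: "is_fvc ends G C1 F1" and fvc2: "is_fvc ends (remove ends G (C1 \<union> F1)) C2 F2"
    using assms(2,3) by (simp_all add: is_z_antler_def is_antler_def)
  obtain V1 E1 where cert1: "is_certificate ends (induced ends G (C1 \<union> F1)) C1 z (V1, E1)"
    using assms(2) by (auto simp: is_z_antler_def)
  obtain V2 E2 where "is_certificate ends (induced ends (remove ends G (C1 \<union> F1)) (C2 \<union> F2)) C2 z (V2, E2)"
    using assms(3) by (auto simp: is_z_antler_def)
  moreover have "C2 \<union> F2 - (C1 \<union> F1) = C2 \<union> F2"
    using fvc2 by (auto simp: is_fvc_def)
  ultimately have cert2: "is_certificate ends (induced ends G (C2 \<union> F2)) C2 z (V2, E2)"
    by (simp add: induced_remove[OF assms(1)])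
  have "(C1 \<union> F1) \<inter> (C2 \<union> F2) = {}"
    using fvc2 by (auto simp: is_fvc_def)
  moreover have "(C1 \<union> F1) \<union> (C2 \<union> F2) = (C1 \<union> C2) \<union> (F1 \<union> F2)"
    by blast
  ultimately have cert: "is_certificate ends (induced ends G ((C1 \<union> C2) \<union> (F1 \<union> F2))) (C1 \<union> C2) z
      (V1 \<union> V2, E1 \<union> E2)"
    using is_certificate_disjoint_union[OF assms(1) _ cert1 cert2] by simp
  moreover have "finite (fst (induced ends G ((C1 \<union> C2) \<union> (F1 \<union> F2))))"
    using assms(1) by (simp add: wf_mgraph_def)
  ultimately have "card (C1 \<union> C2) \<le> fvs ends (induced ends G ((C1 \<union> C2) \<union> (F1 \<union> F2)))"
    by (rule certificate_card_le_fvs)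
  then show ?thesis
    using is_fvc_combine[OF assms(1) fvc1 fvc2] cert by (auto simp: is_z_antler_def is_antler_def)
qed

lemma is_z_antler_seq_prefix:
  assumes "wf_mgraph ends G" "is_z_antler_seq ends z G Cs Fs" "k < length Cs"
  shows "is_z_antler ends z G (\<Union>j \<le> k. Cs ! j) (\<Union>j \<le> k. Fs ! j)"
  using assms(3)
proof (induction k)
  case 0
  then have "is_z_antler ends z (remove ends G (\<Union>j < 0. Cs ! j \<union> Fs ! j)) (Cs ! 0) (Fs ! 0)"
    using assms(2) unfolding is_z_antler_seq_def by blast
  then show ?case
    by (simp add: remove_empty[OF assms(1)])
next
  case (Suc k)
  then have "is_z_antler ends z (remove ends G (\<Union>j < Suc k. Cs ! j \<union> Fs ! j)) (Cs ! Suc k) (Fs ! Suc k)"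
    using assms(2) unfolding is_z_antler_seq_def by blast
  moreover have "(\<Union>j < Suc k. Cs ! j \<union> Fs ! j) = (\<Union>j \<le> k. Cs ! j) \<union> (\<Union>j \<le> k. Fs ! j)"
    by (auto simp: lessThan_Suc_atMost)
  ultimately have "is_z_antler ends z G ((\<Union>j \<le> k. Cs ! j) \<union> Cs ! Suc k) ((\<Union>j \<le> k. Fs ! j) \<union> Fs ! Suc k)"
    using is_z_antler_combine[OF assms(1)] Suc by simp
  moreover have "(\<Union>j \<le> Suc k. Cs ! j) = (\<Union>j \<le> k. Cs ! j) \<union> Cs ! Suc k"
    "(\<Union>j \<le> Suc k. Fs ! j) = (\<Union>j \<le> k. Fs ! j) \<union> Fs ! Suc k"
    by (auto simp: le_Suc_eq)
  ultimately show ?case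
    by argo
qed

theorem proposition27:
  fixes ends :: "'e \<Rightarrow> 'v set" and G :: "('v,'e) mgraph" and z :: nat
    and Cs Fs :: "'v set list"
  assumes "wf_mgraph ends G"
    and "is_z_antler_seq ends z G Cs Fs"
  shows "\<forall>i. 1 \<le> i \<and> i \<le> length Cs \<longrightarrow>
           is_z_antler ends z G (\<Union>j<i. Cs ! j) (\<Union>j<i. Fs ! j)"
proof (intro allI impI)
  fix i
  assume i: "1 \<le> i \<and> i \<le> length Cs"
  then have "{..<i} = {..i - 1}" "i - 1 < length Cs"
    by auto
  then show "is_z_antler ends z G (\<Union>j<i. Cs ! j) (\<Union>j<i. Fs ! j)"
    using is_z_antler_seq_prefix[OF assms] by simp
qed

end
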